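(* Let $\phi=\frac{1+\sqrt5}{2}$ and let $\Gamma\subset SL_2(\mathbb R)$ be the group generated by $$\sigma_0=\begin{pmatrix}1&\phi\\0&1\end{pmatrix},\quad \sigma_1=\begin{pmatrix}\phi&\phi\\1&\phi\end{pmatrix},\quad \sigma_2=\begin{pmatrix}\phi&1\\\phi&\phi\end{pmatrix},\quad \sigma_3=\begin{pmatrix}1&0\\\phi&1\end{pmatrix}.$$ Let $S=\{\gamma\binom{1}{0}:\gamma\in\Gamma\}\subset\mathbb R^2$. There is a constant $C>0$ such that for every $0<\epsilon\le 1$ there exist two distinct points $s_1,s_2\in S$ with $\|s_1-s_2\|\le\epsilon$ and $s_1,s_2\in B(0,r)$, where $r\le C\epsilon^{-2}$.
   Context: $\|\cdot\|$ is the Euclidean norm on $\mathbb R^2$ and $B(0,r)$ is the closed ball of radius $r$ centered at the origin. $\Gamma$ acts on $\mathbb R^2$ by matrix multiplication on column vectors. *)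

theory Defs
  imports "HOL-Analysis.Analysis"
begin

definition phi :: real where "phi = (1 + sqrt 5) / 2"

definition mat2 :: "real \<Rightarrow> real \<Rightarrow> real \<Rightarrow> real \<Rightarrow> real^2^2" where
  "mat2 a b c d = vector [vector [a, b], vector [c, d]]"

definition sigma0 :: "real^2^2" where "sigma0 = mat2 1 phi 0 1"
definition sigma1 :: "real^2^2" where "sigma1 = mat2 phi phi 1 phi"
definition sigma2 :: "real^2^2" where "sigma2 = mat2 phi 1 phi phi"
definition sigma3 :: "real^2^2" where "sigma3 = mat2 1 0 phi 1"

definition gens :: "(real^2^2) set" where "gens = {sigma0, sigma1, sigma2, sigma3}"

inductive_set Gamma :: "(real^2^2) set" where
  Gamma_id: "mat 1 \<in> Gamma"
| Gamma_gen: "g \<in> gens \<Longrightarrow> x \<in> Gamma \<Longrightarrow> g ** x \<in> Gamma"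
| Gamma_inv: "g \<in> gens \<Longrightarrow> x \<in> Gamma \<Longrightarrow> matrix_inv g ** x \<in> Gamma"

definition e1 :: "real^2" where "e1 = vector [1, 0]"

definition orbitS :: "(real^2) set" where "orbitS = {g *v e1 | g. g \<in> Gamma}"

end

theory Submission
  imports Defs "HOL-Computational_Algebra.Primes"
begin

(*
  The orbit contains e1 and sigma1 e1 = (phi, 1) and is invariant under the shears sigma0^m and
  sigma3^m (m an integer), so it contains (1, a phi) and (phi, 1 + b phi^2), whose second
  coordinates differ by Delta = k phi - j for suitable integers j, k.  By Dirichlet's theorem there
  are 0 < k <= N and j with |Delta| < 1/N; since phi is badly approximable (the norm
  j^2 - j k - k^2 of j - k phi is a nonzero integer), also |Delta| >= 1/(4N).  A common shear
  sigma0^m, with m the nearest integer to (phi - 1)/(phi Delta), makes the first coordinates agree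
  up to phi |Delta|/2 while enlarging the points by a factor O(1/|Delta|) = O(N).  This gives two
  distinct orbit points at distance < 2/N in a ball of radius O(N^2); take N about 2/epsilon.
*)

lemma prime_times_square_not_square:
  fixes a b p :: int
  assumes "prime p" "b \<noteq> 0"
  shows "a\<^sup>2 \<noteq> p * b\<^sup>2"
proof
  assume eq: "a\<^sup>2 = p * b\<^sup>2"
  have "p \<noteq> 0" using assms(1) by auto
  with eq assms(2) have "a \<noteq> 0" by auto
  have "prime_elem p" using assms(1) by blast
  have "multiplicity p (a\<^sup>2) = 2 * multiplicity p a"
    using \<open>prime_elem p\<close> \<open>a \<noteq> 0\<close> by (simp add: prime_elem_multiplicity_power_distrib)
  moreover have "multiplicity p (p * b\<^sup>2) = 1 + 2 * multiplicity p b"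
    using \<open>prime_elem p\<close> \<open>p \<noteq> 0\<close> assms(2)
    by (simp add: prime_elem_multiplicity_mult_distrib prime_elem_multiplicity_power_distrib)
  ultimately have "2 * multiplicity p a = 1 + 2 * multiplicity p b" using eq by simp
  then show False by presburger
qed

lemma golden_norm_nonzero:
  fixes j k :: int
  assumes "k \<noteq> 0"
  shows "j\<^sup>2 - j * k - k\<^sup>2 \<noteq> 0"
proof
  assume "j\<^sup>2 - j * k - k\<^sup>2 = 0"
  then have "(2 * j - k)\<^sup>2 = 5 * k\<^sup>2" by (simp add: power2_eq_square algebra_simps)
  then show False using prime_times_square_not_square[of 5 k] assms by simp
qed

lemma phi_squared: "phi\<^sup>2 = phi + 1"
  unfolding phi_def by (simp add: power2_eq_square field_simps)

lemma phi_bounds: "1 < phi" "phi < 2"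
proof -
  have "1 < sqrt 5" "sqrt 5 < 3" by (simp_all add: real_less_rsqrt real_less_lsqrt)
  then show "1 < phi" "phi < 2" unfolding phi_def by simp_all
qed

lemma golden_badly_approximable:
  fixes j k :: int
  assumes "0 < k"
  shows "1 \<le> 4 * k * \<bar>k * phi - j\<bar>"
proof (cases "\<bar>k * phi - j\<bar> < 1")
  case True
  define \<Delta> where "\<Delta> = k * phi - j"
  define \<Delta>' where "\<Delta>' = k * (1 - phi) - j"
  define D where "D = j\<^sup>2 - j * k - k\<^sup>2"
  have "\<Delta> * \<Delta>' = of_int D"
    unfolding \<Delta>_def \<Delta>'_def D_def of_int_diff of_int_mult of_int_power using phi_squared by algebra
  moreover have "1 \<le> \<bar>D\<bar>" using golden_norm_nonzero[of k j] assms unfolding D_def by linarith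
  ultimately have "1 \<le> \<bar>\<Delta>\<bar> * \<bar>\<Delta>'\<bar>"
    by (simp add: abs_mult[symmetric] flip: of_int_abs)
  also have "\<dots> \<le> \<bar>\<Delta>\<bar> * (4 * k)"
  proof (rule mult_left_mono)
    have "\<Delta>' = \<Delta> - k * (2 * phi - 1)" unfolding \<Delta>_def \<Delta>'_def by (simp add: algebra_simps)
    moreover have "0 \<le> k * (2 * phi - 1)" "k * (2 * phi - 1) \<le> 3 * k"
      using phi_bounds assms by simp_all
    ultimately show "\<bar>\<Delta>'\<bar> \<le> 4 * k" using True assms unfolding \<Delta>_def by linarith
  qed simp
  finally show ?thesis unfolding \<Delta>_def by (simp add: mult_ac)
next
  case False
  moreover have "1 \<le> 4 * real_of_int k" using assms by simp
  ultimately show ?thesis using mult_mono[of 1 "4 * real_of_int k" 1 "\<bar>k * phi - j\<bar>"] by simp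
qed

lemma mat2_mult_vector: "mat2 a b c d *v vector [x, y] = vector [a * x + b * y, c * x + d * y]"
  by (simp add: mat2_def vec_eq_iff forall_2 matrix_vector_mult_def sum_2)

lemma det_mat2: "det (mat2 a b c d) = a * d - b * c"
  by (simp add: det_2 mat2_def)

lemma det_gens: "g \<in> gens \<Longrightarrow> det g = 1"
  using phi_squared
  by (auto simp: gens_def sigma0_def sigma1_def sigma2_def sigma3_def det_mat2 power2_eq_square)

lemma matrix_inv_mult_left:
  fixes A :: "'a::semiring_1^'n^'n"
  assumes "invertible A"
  shows "matrix_inv A ** A = mat 1"
  using assms unfolding invertible_def matrix_inv_def
  by (rule someI_ex[where P = "\<lambda>A'. A ** A' = mat 1 \<and> A' ** A = mat 1", THEN conjunct2])

lemma e1_in_orbitS: "e1 \<in> orbitS"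
  unfolding orbitS_def using Gamma_id by force

lemma orbitS_mult_gen_iff:
  assumes "g \<in> gens"
  shows "g *v v \<in> orbitS \<longleftrightarrow> v \<in> orbitS"
proof
  assume "g *v v \<in> orbitS"
  then obtain h where "h \<in> Gamma" "g *v v = h *v e1" unfolding orbitS_def by blast
  moreover have "matrix_inv g ** g = mat 1"
    using det_gens[OF assms] by (simp add: matrix_inv_mult_left invertible_det_nz)
  ultimately have "v = (matrix_inv g ** h) *v e1"
    by (metis matrix_vector_mul_assoc matrix_vector_mul_lid)
  then show "v \<in> orbitS" unfolding orbitS_def using Gamma_inv[OF assms \<open>h \<in> Gamma\<close>] by blast
next
  assume "v \<in> orbitS"
  then show "g *v v \<in> orbitS"
    unfolding orbitS_def using Gamma_gen[OF assms] matrix_vector_mul_assoc by blast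
qed

lemma int_shift_invariant:
  fixes P :: "int \<Rightarrow> bool"
  assumes "\<And>i. P (i + 1) \<longleftrightarrow> P i"
  shows "P z \<longleftrightarrow> P 0"
proof (induction z rule: int_induct[where k = 0])
  case (step2 i)
  then show ?case using assms[of "i - 1"] by simp
qed (use assms in simp_all)

lemma orbitS_shear_x_iff:
  "vector [x + of_int z * phi * y, y] \<in> orbitS \<longleftrightarrow> vector [x, y] \<in> orbitS"
proof (rule int_shift_invariant[where P = "\<lambda>z. vector [x + of_int z * phi * y, y] \<in> orbitS", simplified])
  fix i :: int
  have "vector [x + of_int (i + 1) * phi * y, y] = sigma0 *v vector [x + of_int i * phi * y, y]"
    unfolding sigma0_def mat2_mult_vector by (simp add: algebra_simps)
  then show "vector [x + (of_int i + 1) * phi * y, y] \<in> orbitS \<longleftrightarrow>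
      vector [x + of_int i * phi * y, y] \<in> orbitS"
    using orbitS_mult_gen_iff[of sigma0] by (simp add: gens_def)
qed

lemma orbitS_shear_y_iff:
  "vector [x, y + of_int z * phi * x] \<in> orbitS \<longleftrightarrow> vector [x, y] \<in> orbitS"
proof (rule int_shift_invariant[where P = "\<lambda>z. vector [x, y + of_int z * phi * x] \<in> orbitS", simplified])
  fix i :: int
  have "vector [x, y + of_int (i + 1) * phi * x] = sigma3 *v vector [x, y + of_int i * phi * x]"
    unfolding sigma3_def mat2_mult_vector by (simp add: algebra_simps)
  then show "vector [x, y + (of_int i + 1) * phi * x] \<in> orbitS \<longleftrightarrow>
      vector [x, y + of_int i * phi * x] \<in> orbitS"
    using orbitS_mult_gen_iff[of sigma3] by (simp add: gens_def)
qed

lemma orbitS_seed_points: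
  "vector [1, of_int a * phi] \<in> orbitS"
  "vector [phi, 1 + of_int b * phi\<^sup>2] \<in> orbitS"
proof -
  show "vector [1, of_int a * phi] \<in> orbitS"
    using orbitS_shear_y_iff[of 1 0 a] e1_in_orbitS by (simp add: e1_def)
  have "sigma1 *v e1 = vector [phi, 1]"
    unfolding sigma1_def e1_def mat2_mult_vector by simp
  then have "vector [phi, 1] \<in> orbitS"
    using orbitS_mult_gen_iff[of sigma1 e1] e1_in_orbitS by (simp add: gens_def)
  then show "vector [phi, 1 + of_int b * phi\<^sup>2] \<in> orbitS"
    using orbitS_shear_y_iff[of phi 1 b] by (simp add: power2_eq_square mult_ac)
qed

lemma norm_vector2_le: "norm (vector [x, y] :: real^2) \<le> \<bar>x\<bar> + \<bar>y\<bar>"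
  using norm_le_l1_cart[of "vector [x, y] :: real^2"] by (simp add: sum_2)

lemma norm_shear_le: "norm (vector [x + c * y, y] :: real^2) \<le> (1 + \<bar>c\<bar>) * (\<bar>x\<bar> + \<bar>y\<bar>)"
proof -
  have "norm (vector [x + c * y, y] :: real^2) \<le> \<bar>x\<bar> + \<bar>c\<bar> * \<bar>y\<bar> + \<bar>y\<bar>"
    using norm_vector2_le[of "x + c * y" y] abs_triangle_ineq[of x "c * y"] by (simp add: abs_mult)
  also have "\<dots> \<le> (1 + \<bar>c\<bar>) * (\<bar>x\<bar> + \<bar>y\<bar>)"
    by (simp add: algebra_simps)
  finally show ?thesis .
qed

lemma round_quotient_multiple:
  fixes u c :: real
  assumes "c \<noteq> 0"
  shows "\<bar>u - of_int (round (u / c)) * c\<bar> \<le> \<bar>c\<bar> / 2"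
    and "\<bar>of_int (round (u / c))\<bar> \<le> \<bar>u\<bar> / \<bar>c\<bar> + 1 / 2"
proof -
  have round_err: "\<bar>u / c - of_int (round (u / c))\<bar> \<le> 1 / 2"
    using of_int_round_abs_le[of "u / c"] by linarith
  have "u - of_int (round (u / c)) * c = c * (u / c - of_int (round (u / c)))"
    using assms by (simp add: field_simps)
  then show "\<bar>u - of_int (round (u / c)) * c\<bar> \<le> \<bar>c\<bar> / 2"
    using mult_left_mono[OF round_err, of "\<bar>c\<bar>"] by (simp add: abs_mult)
  have "\<bar>of_int (round (u / c))\<bar> \<le> \<bar>u / c\<bar> + 1 / 2"
    using round_err by arith
  then show "\<bar>of_int (round (u / c))\<bar> \<le> \<bar>u\<bar> / \<bar>c\<bar> + 1 / 2"
    by (simp add: abs_divide)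
qed

lemma orbitS_shear_pair:
  assumes "vector [x1, y1] \<in> orbitS" "vector [x2, y2] \<in> orbitS" "y1 \<noteq> y2"
  defines "K \<equiv> 1 + phi / 2 + \<bar>x1 - x2\<bar> / \<bar>y1 - y2\<bar>"
  obtains s1 s2 where "s1 \<in> orbitS" "s2 \<in> orbitS" "s1 \<noteq> s2"
    "norm (s1 - s2) \<le> (1 + phi / 2) * \<bar>y1 - y2\<bar>"
    "norm s1 \<le> K * (\<bar>x1\<bar> + \<bar>y1\<bar>)" "norm s2 \<le> K * (\<bar>x2\<bar> + \<bar>y2\<bar>)"
proof -
  define c where "c = phi * (y1 - y2)"
  define m where "m = round ((x2 - x1) / c)"
  define s1 where "s1 = (vector [x1 + of_int m * phi * y1, y1] :: real^2)"
  define s2 where "s2 = (vector [x2 + of_int m * phi * y2, y2] :: real^2)"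
  have abs_c: "\<bar>c\<bar> = phi * \<bar>y1 - y2\<bar>" using phi_bounds by (simp add: c_def abs_mult)
  have "c \<noteq> 0" using assms(3) phi_bounds by (simp add: c_def)
  have "s1 \<in> orbitS" "s2 \<in> orbitS"
    using assms(1,2) orbitS_shear_x_iff by (simp_all add: s1_def s2_def)
  moreover have "s1 \<noteq> s2" using assms(3) by (simp add: s1_def s2_def vec_eq_iff forall_2)
  moreover have "norm (s1 - s2) \<le> (1 + phi / 2) * \<bar>y1 - y2\<bar>"
  proof -
    have "s1 - s2 = vector [- (x2 - x1 - of_int m * c), y1 - y2]"
      by (simp add: s1_def s2_def c_def vec_eq_iff forall_2 algebra_simps)
    then have "norm (s1 - s2) \<le> \<bar>c\<bar> / 2 + \<bar>y1 - y2\<bar>"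
      using norm_vector2_le[of "- (x2 - x1 - of_int m * c)" "y1 - y2"]
        round_quotient_multiple(1)[OF \<open>c \<noteq> 0\<close>, of "x2 - x1"]
      by (simp only: m_def abs_minus_cancel)
    with abs_c show ?thesis by (simp add: algebra_simps)
  qed
  moreover have "1 + \<bar>of_int m * phi\<bar> \<le> K"
  proof -
    have "\<bar>of_int m\<bar> * phi \<le> (\<bar>x1 - x2\<bar> / \<bar>c\<bar> + 1 / 2) * phi"
      using round_quotient_multiple(2)[OF \<open>c \<noteq> 0\<close>, of "x2 - x1"] phi_bounds
      by (simp add: m_def abs_minus_commute)
    also have "\<dots> = \<bar>x1 - x2\<bar> / \<bar>y1 - y2\<bar> + phi / 2"
      using abs_c phi_bounds by (simp add: field_simps)
    finally show ?thesis using phi_bounds by (simp add: K_def abs_mult)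
  qed
  then have "norm s1 \<le> K * (\<bar>x1\<bar> + \<bar>y1\<bar>)" "norm s2 \<le> K * (\<bar>x2\<bar> + \<bar>y2\<bar>)"
    unfolding s1_def s2_def
    by (rule order_trans[OF norm_shear_le mult_right_mono], simp)+
  ultimately show ?thesis using that by blast
qed

lemma orbitS_close_pair:
  fixes N :: nat
  assumes "0 < N"
  obtains s1 s2 where "s1 \<in> orbitS" "s2 \<in> orbitS" "s1 \<noteq> s2" "norm (s1 - s2) < 2 / real N"
    "norm s1 \<le> 90 * (real N)\<^sup>2" "norm s2 \<le> 90 * (real N)\<^sup>2"
proof -
  obtain j k where k: "0 < k" "k \<le> int N" and approx: "\<bar>of_int k * phi - of_int j\<bar> < 1 / real N"
    using Dirichlet_approx[OF assms] by metis
  define \<Delta> where "\<Delta> = of_int k * phi - of_int j"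
  have N_ge_1: "1 \<le> real N" using assms by simp
  have k_le_N: "of_int k \<le> real N" using k(2) by (metis of_int_le_iff of_int_of_nat_eq)
  have "1 \<le> 4 * k * \<bar>\<Delta>\<bar>" using golden_badly_approximable[OF k(1)] by (simp add: \<Delta>_def)
  also have "\<dots> \<le> 4 * real N * \<bar>\<Delta>\<bar>" using k_le_N by (simp add: mult_right_mono)
  finally have \<Delta>_lower: "1 \<le> 4 * real N * \<bar>\<Delta>\<bar>" .
  have \<Delta>_upper: "\<bar>\<Delta>\<bar> < 1 / real N" using approx by (simp add: \<Delta>_def)
  define y where "y = 1 + of_int (j - 1) * phi\<^sup>2"
  have P: "vector [1, y + \<Delta>] \<in> orbitS"
    using orbitS_seed_points(1)[of "j - 1 + k"] phi_squared
    by (simp add: y_def \<Delta>_def algebra_simps)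
  have Q: "vector [phi, y] \<in> orbitS" unfolding y_def by (rule orbitS_seed_points(2))
  have "\<Delta> \<noteq> 0" using \<Delta>_lower by auto
  then obtain s1 s2 where s: "s1 \<in> orbitS" "s2 \<in> orbitS" "s1 \<noteq> s2"
    and dist: "norm (s1 - s2) \<le> (1 + phi / 2) * \<bar>\<Delta>\<bar>"
    and norms: "norm s1 \<le> (1 + phi / 2 + \<bar>1 - phi\<bar> / \<bar>\<Delta>\<bar>) * (\<bar>1\<bar> + \<bar>y + \<Delta>\<bar>)"
      "norm s2 \<le> (1 + phi / 2 + \<bar>1 - phi\<bar> / \<bar>\<Delta>\<bar>) * (\<bar>phi\<bar> + \<bar>y\<bar>)"
    using orbitS_shear_pair[OF P Q] by auto
  have close: "norm (s1 - s2) < 2 / real N"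
  proof -
    have "(1 + phi / 2) * \<bar>\<Delta>\<bar> < 2 * (1 / real N)"
      using phi_bounds \<Delta>_upper by (intro mult_strict_mono') auto
    then show ?thesis using dist by simp
  qed
  have K_le: "1 + phi / 2 + \<bar>1 - phi\<bar> / \<bar>\<Delta>\<bar> \<le> 6 * real N"
  proof -
    have "\<bar>1 - phi\<bar> / \<bar>\<Delta>\<bar> \<le> 1 / \<bar>\<Delta>\<bar>"
      using phi_bounds \<open>\<Delta> \<noteq> 0\<close> by (simp add: divide_right_mono)
    also have "\<dots> \<le> 4 * real N" using \<Delta>_lower \<open>\<Delta> \<noteq> 0\<close> by (simp add: field_simps)
    finally show ?thesis using phi_bounds N_ge_1 by simp
  qed
  have sizes: "\<bar>1\<bar> + \<bar>y + \<Delta>\<bar> \<le> 15 * real N" "\<bar>phi\<bar> + \<bar>y\<bar> \<le> 15 * real N"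
  proof -
    have "1 / real N \<le> 1" using N_ge_1 by simp
    then have "\<bar>\<Delta>\<bar> \<le> 1" using \<Delta>_upper by linarith
    moreover have "0 < of_int k * phi" "of_int k * phi < of_int k * 2" using k phi_bounds by simp_all
    then have "0 < of_int k * phi" "of_int k * phi < 2 * real N" using k_le_N by linarith+
    moreover have "of_int (j - 1) = of_int k * phi - \<Delta> - 1" by (simp add: \<Delta>_def)
    ultimately have "\<bar>real_of_int (j - 1)\<bar> \<le> 4 * real N" using N_ge_1 by arith
    moreover have "phi\<^sup>2 \<le> 3" using phi_squared phi_bounds by simp
    ultimately have "\<bar>of_int (j - 1) * phi\<^sup>2\<bar> \<le> 4 * real N * 3"
      unfolding abs_mult by (intro mult_mono) auto
    then have "\<bar>y\<bar> \<le> 13 * real N" using N_ge_1 by (simp add: y_def)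
    then show "\<bar>1\<bar> + \<bar>y + \<Delta>\<bar> \<le> 15 * real N" "\<bar>phi\<bar> + \<bar>y\<bar> \<le> 15 * real N"
      using \<open>\<bar>\<Delta>\<bar> \<le> 1\<close> phi_bounds N_ge_1 by linarith+
  qed
  have "norm s1 \<le> 90 * (real N)\<^sup>2" "norm s2 \<le> 90 * (real N)\<^sup>2"
    using order_trans[OF norms(1) mult_mono[OF K_le sizes(1)]]
      order_trans[OF norms(2) mult_mono[OF K_le sizes(2)]] N_ge_1
    by (simp_all add: power2_eq_square)
  with s close show ?thesis using that by blast
qed

lemma nat_ceiling_two_div_bounds:
  fixes \<epsilon> :: real
  assumes "0 < \<epsilon>" "\<epsilon> \<le> 1"
  defines "N \<equiv> nat \<lceil>2 / \<epsilon>\<rceil>"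
  shows "0 < N" "2 / real N \<le> \<epsilon>" "real N \<le> 3 / \<epsilon>"
proof -
  have "real N = of_int \<lceil>2 / \<epsilon>\<rceil>" unfolding N_def using assms(1) by simp
  then have "2 / \<epsilon> \<le> real N" "real N < 2 / \<epsilon> + 1"
    using ceiling_correct[of "2 / \<epsilon>"] by linarith+
  moreover have "0 < 2 / \<epsilon>" "1 \<le> 1 / \<epsilon>" "3 / \<epsilon> = 2 / \<epsilon> + 1 / \<epsilon>"
    using assms by (simp_all add: add_divide_distrib[symmetric])
  ultimately have "0 < real N" "real N \<le> 3 / \<epsilon>" by linarith+
  then show "0 < N" "real N \<le> 3 / \<epsilon>" by simp_all
  show "2 / real N \<le> \<epsilon>"
    using \<open>2 / \<epsilon> \<le> real N\<close> \<open>0 < real N\<close> assms(1) by (simp add: field_simps)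
qed

theorem proposition1p2:
  shows "\<exists>C>0. \<forall>\<epsilon>::real. 0 < \<epsilon> \<and> \<epsilon> \<le> 1 \<longrightarrow>
           (\<exists>s1 s2 r. s1 \<in> orbitS \<and> s2 \<in> orbitS \<and> s1 \<noteq> s2 \<and> norm (s1 - s2) \<le> \<epsilon>
              \<and> s1 \<in> cball 0 r \<and> s2 \<in> cball 0 r \<and> r \<le> C * \<epsilon> powr (-2))"
proof (rule exI[of _ 810], intro conjI allI impI)
  fix \<epsilon> :: real
  assume "0 < \<epsilon> \<and> \<epsilon> \<le> 1"
  then have \<epsilon>: "0 < \<epsilon>" "\<epsilon> \<le> 1" by auto
  define N where "N = nat \<lceil>2 / \<epsilon>\<rceil>"
  note N = nat_ceiling_two_div_bounds[OF \<epsilon>, folded N_def]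
  obtain s1 s2 where s: "s1 \<in> orbitS" "s2 \<in> orbitS" "s1 \<noteq> s2" "norm (s1 - s2) < 2 / real N"
    "norm s1 \<le> 90 * (real N)\<^sup>2" "norm s2 \<le> 90 * (real N)\<^sup>2"
    using orbitS_close_pair[OF N(1)] by blast
  have "(real N)\<^sup>2 \<le> (3 / \<epsilon>)\<^sup>2" using N(3) by (simp add: power_mono)
  also have "\<dots> = 9 * \<epsilon> powr (-2)"
    using \<epsilon>(1) by (simp add: powr_minus_divide powr_numeral power_divide)
  finally have "90 * (real N)\<^sup>2 \<le> 810 * \<epsilon> powr (-2)" by simp
  with s N(2) show "\<exists>s1 s2 r. s1 \<in> orbitS \<and> s2 \<in> orbitS \<and> s1 \<noteq> s2 \<and> norm (s1 - s2) \<le> \<epsilon>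
      \<and> s1 \<in> cball 0 r \<and> s2 \<in> cball 0 r \<and> r \<le> 810 * \<epsilon> powr (-2)"
    by (intro exI[of _ s1] exI[of _ s2] exI[of _ "90 * (real N)\<^sup>2"]) auto
qed simp

end
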